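(* Let $G$ be a finite simple graph of order $n$ whose adjacency matrix $A(G)$ is non-singular, and suppose $\bar d\le n-2\ln n-3$. Then $\mathcal{E}(G)\geq n-1+\bar{d}$, unless $G$ is isomorphic to the path $P_4$ or to the paw $H$.
   Context: For a finite simple graph $G$ with $n$ vertices and $m$ edges, $A(G)$ is its adjacency matrix with eigenvalues $\lambda_1\ge\cdots\ge\lambda_n$, and the energy is $\mathcal{E}(G)=\sum_{i=1}^n|\lambda_i|$. $G$ is non-singular if $A(G)$ is non-singular. $\bar d=2m/n$ is the average degree; $\ln$ is the natural logarithm. $P_4$ is the path on 4 vertices, and the paw $H$ is the graph on 4 vertices consisting of a triangle together with one extra vertex adjacent to exactly one vertex of the triangle. *)

theory Defs
  imports Complex_Main "Jordan_Normal_Form.Char_Poly" "Jordan_Normal_Form.Determinant"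
    "HOL-Computational_Algebra.Polynomial"
begin

definition simple_graph :: "nat \<Rightarrow> (nat \<Rightarrow> nat \<Rightarrow> bool) \<Rightarrow> bool" where
  "simple_graph n E \<longleftrightarrow> (\<forall>i<n. \<forall>j<n. E i j = E j i) \<and> (\<forall>i<n. \<not> E i i)"

definition adj_matrix :: "nat \<Rightarrow> (nat \<Rightarrow> nat \<Rightarrow> bool) \<Rightarrow> real mat" where
  "adj_matrix n E = mat n n (\<lambda>(i, j). if E i j then 1 else 0)"

definition num_edges :: "nat \<Rightarrow> (nat \<Rightarrow> nat \<Rightarrow> bool) \<Rightarrow> nat" where
  "num_edges n E = card {(i, j). i < j \<and> j < n \<and> E i j}"

definition avg_degree :: "nat \<Rightarrow> (nat \<Rightarrow> nat \<Rightarrow> bool) \<Rightarrow> real" where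
  "avg_degree n E = 2 * real (num_edges n E) / real n"

definition eigenvalues_mset :: "real mat \<Rightarrow> complex multiset" where
  "eigenvalues_mset A = proots (char_poly (map_mat complex_of_real A))"

definition graph_energy :: "nat \<Rightarrow> (nat \<Rightarrow> nat \<Rightarrow> bool) \<Rightarrow> real" where
  "graph_energy n E = sum_mset (image_mset cmod (eigenvalues_mset (adj_matrix n E)))"

definition graph_iso :: "nat \<Rightarrow> (nat \<Rightarrow> nat \<Rightarrow> bool) \<Rightarrow> nat \<Rightarrow> (nat \<Rightarrow> nat \<Rightarrow> bool) \<Rightarrow> bool" where
  "graph_iso n E n' E' \<longleftrightarrow>
     (\<exists>f. bij_betw f {0..<n} {0..<n'} \<and> (\<forall>i<n. \<forall>j<n. E i j \<longleftrightarrow> E' (f i) (f j)))"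

definition P4_edges :: "nat \<Rightarrow> nat \<Rightarrow> bool" where
  "P4_edges i j \<longleftrightarrow> {i, j} \<in> {{0, 1}, {1, 2}, {2, 3}}"

definition paw_edges :: "nat \<Rightarrow> nat \<Rightarrow> bool" where
  "paw_edges i j \<longleftrightarrow> {i, j} \<in> {{0, 1}, {1, 2}, {0, 2}, {0, 3}}"

end

theory Submission
  imports Defs "Jordan_Normal_Form.Schur_Decomposition"
begin

(* Let x_1, ..., x_n be the moduli of the eigenvalues of A(G). Since A(G) is a non-singular
   integer matrix, x_1 * ... * x_n = |det A(G)| >= 1, and since tr A(G)^2 = 2m, the sum of the
   x_i^2 is at least n * dbar. If dbar <= 1, the bound follows from x >= 1 + ln x and
   sum ln x_i >= 0. Otherwise let u >= 1 be the largest x_i; every other x_i satisfies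
   x >= 1 + ln x + (x - 1)^2 / (2u), and summing these, the two constraints reduce the claim to
   the nonnegativity of u^2 + 2u(1 - dbar - ln u) + (n - 2) dbar - (n - 1). This expression is
   affine in dbar, and for the largest admissible dbar it is bounded below, via the tangent of
   ln at n/2, by a quadratic in u whose discriminant is nonpositive for n >= 9; the hypothesis
   dbar > 1 forces n >= 9. *)

subsection \<open>Inequalities for the logarithm\<close>

lemma ln_le_half_diff_inverse:
  fixes u :: real assumes "1 \<le> u" shows "ln u \<le> (u - 1/u) / 2"
proof -
  let ?f = "\<lambda>x::real. (x - 1/x) / 2 - ln x"
  have "?f 1 \<le> ?f u"
  proof (rule DERIV_nonneg_imp_nondecreasing[OF assms])
    fix x :: real assume "1 \<le> x"
    then have "DERIV ?f x :> (1 - 1/x)\<^sup>2 / 2"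
      by (auto intro!: derivative_eq_intros simp: power2_eq_square field_simps)
    then show "\<exists>y. DERIV ?f x :> y \<and> 0 \<le> y" by auto
  qed
  then show ?thesis by simp
qed

lemma ln_le_diff_one_sub_square:
  fixes y :: real assumes "0 < y" "y \<le> 1" shows "ln y \<le> y - 1 - (y - 1)\<^sup>2 / 2"
proof -
  let ?f = "\<lambda>x::real. ln x - x + (x - 1)\<^sup>2 / 2"
  have "?f y \<le> ?f 1"
  proof (rule DERIV_nonneg_imp_nondecreasing[OF assms(2)])
    fix x :: real assume "y \<le> x"
    with assms have "DERIV ?f x :> (x - 1)\<^sup>2 / x" and "0 < x"
      by (auto intro!: derivative_eq_intros simp: power2_eq_square field_simps)
    then show "\<exists>d. DERIV ?f x :> d \<and> 0 \<le> d" by auto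
  qed
  then show ?thesis by simp
qed

lemma one_add_ln_add_square_le:
  fixes u y :: real assumes "1 \<le> u" "0 < y" "y \<le> u"
  shows "1 + ln y + (y - 1)\<^sup>2 / (2 * u) \<le> y"
proof (cases "y \<le> 1")
  case True
  have "(y - 1)\<^sup>2 / (2 * u) \<le> (y - 1)\<^sup>2 / 2"
    using assms by (intro divide_left_mono) auto
  with ln_le_diff_one_sub_square[OF assms(2) True] show ?thesis by linarith
next
  case False
  have "ln y \<le> (y - 1/y) / 2" using False ln_le_half_diff_inverse by auto
  also have "\<dots> = y - 1 - (y - 1)\<^sup>2 / (2 * y)"
    using assms by (simp add: field_simps power2_eq_square)
  finally have "ln y \<le> y - 1 - (y - 1)\<^sup>2 / (2 * y)" .
  moreover have "(y - 1)\<^sup>2 / (2 * u) \<le> (y - 1)\<^sup>2 / (2 * y)"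
    using assms False by (intro divide_left_mono) auto
  ultimately show ?thesis by linarith
qed

lemma ln_le_sqrt: fixes x :: real assumes "1 \<le> x" shows "ln x \<le> sqrt x"
proof -
  have "ln (sqrt x) \<le> (sqrt x - 1 / sqrt x) / 2"
    using assms by (intro ln_le_half_diff_inverse) simp
  also have "\<dots> \<le> sqrt x / 2" using assms by simp
  finally show ?thesis using assms by (simp add: ln_sqrt)
qed

subsection \<open>Numerical bounds\<close>

lemma exp_one_bounds: "27/10 \<le> exp (1::real)" "exp (1::real) \<le> 272/100"
proof -
  obtain t :: real where "exp 1 = (\<Sum>m<6. 1 ^ m / fact m) + exp t / fact 6 * 1 ^ 6"
    using Maclaurin_exp_le[of 1 6] by blast
  then have "(\<Sum>m<6. 1 / fact m) \<le> exp (1::real)"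
    by (simp add: add_increasing2)
  then show "27/10 \<le> exp (1::real)"
    by (simp add: lessThan_nat_numeral fact_numeral)
  obtain s :: real where "exp (-1) = (\<Sum>m<8. (-1) ^ m / fact m) + exp s / fact 8 * (-1) ^ 8"
    using Maclaurin_exp_le[of "-1" 8] by blast
  then have "(\<Sum>m<8. (-1) ^ m / fact m) \<le> exp (-1::real)"
    by (simp add: add_increasing2)
  then have "1854/5040 \<le> exp (-1::real)"
    by (simp add: lessThan_nat_numeral fact_numeral)
  then show "exp (1::real) \<le> 272/100"
    by (simp add: exp_minus field_simps)
qed

lemma ln_numeral_bounds:
  "69/100 \<le> ln (2::real)" "ln (2::real) \<le> 7/10"
  "1/2 \<le> ln (5::real)" "1 \<le> ln (6::real)" "3/2 \<le> ln (7::real)" "2 \<le> ln (8::real)"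
  "ln (9::real) \<le> 9/4" "ln (11::real) \<le> 5/2" "ln (19::real) \<le> 3"
proof -
  have ln_ge: "real m / real k \<le> ln x"
    if "0 < x" "0 < k" "(272/100) ^ m \<le> x ^ k" for x :: real and k m :: nat
  proof -
    have "exp 1 ^ m \<le> x ^ k"
      using that exp_one_bounds(2) power_mono[of "exp 1" "272/100::real" m] by simp
    then have "ln (exp 1 ^ m) \<le> ln (x ^ k)"
      using that by simp
    then show ?thesis using that by (simp add: ln_realpow field_simps)
  qed
  have ln_le: "ln x \<le> real m / real k"
    if "0 < x" "0 < k" "x ^ k \<le> (27/10) ^ m" for x :: real and k m :: nat
  proof -
    have "x ^ k \<le> exp 1 ^ m"
      using that exp_one_bounds(1) power_mono[of "27/10::real" "exp 1" m] by simp
    then have "ln (x ^ k) \<le> ln (exp 1 ^ m)"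
      using that by simp
    then show ?thesis using that by (simp add: ln_realpow field_simps)
  qed
  note numerals = power_divide divide_le_eq le_divide_eq
  show "69/100 \<le> ln (2::real)" using ln_ge[of 2 100 69] by (simp add: numerals)
  show "ln (2::real) \<le> 7/10" using ln_le[of 2 10 7] by (simp add: numerals)
  show "1/2 \<le> ln (5::real)" using ln_ge[of 5 2 1] by (simp add: numerals)
  show "1 \<le> ln (6::real)" using ln_ge[of 6 1 1] by (simp add: numerals)
  show "3/2 \<le> ln (7::real)" using ln_ge[of 7 2 3] by (simp add: numerals)
  show "2 \<le> ln (8::real)" using ln_ge[of 8 1 2] by (simp add: numerals)
  show "ln (9::real) \<le> 9/4" using ln_le[of 9 4 9] by (simp add: numerals)
  show "ln (11::real) \<le> 5/2" using ln_le[of 11 2 5] by (simp add: numerals)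
  show "ln (19::real) \<le> 3" using ln_le[of 19 1 3] by (simp add: numerals)
qed

lemma nine_le_if_bound_gt_one:
  fixes n :: nat assumes "1 < real n - 2 * ln (real n) - 3"
  shows "9 \<le> n"
proof (rule ccontr)
  assume "\<not> 9 \<le> n"
  then consider "n \<le> 4" | "n = 5" | "n = 6" | "n = 7" | "n = 8"
    by linarith
  then show False
  proof cases
    case 1
    have "0 \<le> ln (real n)"
      by (cases "n = 0") simp_all
    with 1 assms show False by linarith
  qed (use assms ln_numeral_bounds in simp_all)
qed

lemma ln_le_quarter:
  fixes n :: nat assumes "9 \<le> n"
  shows "ln (real n) \<le> real n / 4"
proof -
  have "ln (real n / 9) \<le> real n / 9 - 1"
    using assms by (intro ln_le_minus_one) simp
  then have "ln (real n) \<le> ln 9 + real n / 9 - 1"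
    using assms by (simp add: ln_div)
  then show ?thesis
    using assms ln_numeral_bounds(7) by simp
qed

(* The inequality tangent_discriminant_nonneg below with ln 2 replaced by 0.69. *)
lemma discriminant_polynomial_nonneg:
  fixes n :: nat
  defines "t \<equiv> ln (real n)"
  assumes n: "9 \<le> n"
  shows "0 \<le> 138/100 * (real n)\<^sup>2 + 62/100 * real n * t - 13761/10000 * real n
    - real n * t\<^sup>2 - 16 * t - 28" (is "0 \<le> ?F")
proof -
  have t0: "0 \<le> t" using n by (simp add: t_def)
  have t_le: "t \<le> ln b" if "real n \<le> b" for b :: real
    using that n by (simp add: t_def)
  have F_ge: "real n * (138/100 * real n - 13761/10000 - (T - 62/100) * T) - 16 * T - 28 \<le> ?F"
    if "t \<le> T" "62/100 \<le> T" for T :: real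
  proof -
    have "?F - (real n * (138/100 * real n - 13761/10000 - (T - 62/100) * T) - 16 * T - 28)
        = real n * ((T - t) * (t + T - 62/100)) + 16 * (T - t)" (is "_ = ?R")
      by (simp add: field_simps power2_eq_square)
    moreover have "0 \<le> ?R"
      using that t0 by (intro add_nonneg_nonneg mult_nonneg_nonneg) auto
    ultimately show ?thesis by (simp only: diff_ge_0_iff_ge flip: \<open>_ = ?R\<close>)
  qed
  have grow: "m * (a * m - b) \<le> real n * (a * real n - b)"
    if "m \<le> real n" "0 \<le> a * m - b" "0 \<le> a" for m a b :: real
    using that by (intro mult_mono) (auto intro: mult_left_mono)
  consider "n = 9" | "n = 10 \<or> n = 11" | "12 \<le> n \<and> n \<le> 19" | "20 \<le> n"
    using n by linarith
  then show ?thesis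
  proof cases
    case 1
    then show ?thesis
      using F_ge[of "9/4"] t_le[of 9] ln_numeral_bounds(7) by simp
  next
    case 2
    then show ?thesis
      using F_ge[of "5/2"] t_le[of 11] ln_numeral_bounds(8)
        grow[of 10 "138/100" "13761/10000 + (5/2 - 62/100) * (5/2)"] by auto
  next
    case 3
    then show ?thesis
      using F_ge[of 3] t_le[of 19] ln_numeral_bounds(9)
        grow[of 12 "138/100" "13761/10000 + (3 - 62/100) * 3"] by auto
  next
    case 4
    have "t \<le> sqrt (real n)"
      using n by (simp add: t_def ln_le_sqrt)
    then have "t\<^sup>2 \<le> real n"
      using t0 by (metis power_mono real_sqrt_pow2 of_nat_0_le_iff)
    then have "real n * t\<^sup>2 \<le> real n * real n"
      by (intro mult_left_mono) auto
    moreover have "t \<le> real n / 4"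
      using ln_le_quarter n by (simp add: t_def)
    moreover have "0 \<le> real n * t" using t0 by simp
    moreover have "20 * (38/100 * 20 - 53761/10000) \<le> real n * (38/100 * real n - 53761/10000)"
      using 4 by (intro grow) auto
    ultimately show ?thesis by (simp add: power2_eq_square algebra_simps)
  qed
qed

lemma tangent_discriminant_nonneg:
  fixes n :: nat assumes n: "9 \<le> n"
  shows "real n * (real n - ln (real n) - 5 - ln 2)\<^sup>2
    \<le> (real n - 4) * ((real n - 2) * (real n - 2 * ln (real n) - 3) - (real n - 1))"
proof -
  define t L where "t = ln (real n)" and "L = ln (2::real)"
  have L: "69/100 \<le> L" "L \<le> 7/10"
    using ln_numeral_bounds by (simp_all add: L_def)
  have "t \<le> real n / 4"
    using ln_le_quarter n by (simp add: t_def)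
  then have "0 \<le> real n * ((L - 69/100) * (2 * real n - 2 * t - 10 - L - 69/100))"
    using L n by (intro mult_nonneg_nonneg) auto
  moreover have "0 \<le> 138/100 * (real n)\<^sup>2 + 62/100 * real n * t - 13761/10000 * real n
      - real n * t\<^sup>2 - 16 * t - 28"
    using discriminant_polynomial_nonneg n by (simp add: t_def)
  moreover have "(real n - 4) * ((real n - 2) * (real n - 2 * t - 3) - (real n - 1))
      - real n * (real n - t - 5 - L)\<^sup>2
    = (138/100 * (real n)\<^sup>2 + 62/100 * real n * t - 13761/10000 * real n
        - real n * t\<^sup>2 - 16 * t - 28)
      + real n * ((L - 69/100) * (2 * real n - 2 * t - 10 - L - 69/100))"
    by (simp add: field_simps power2_eq_square)
  ultimately show ?thesis
    unfolding t_def L_def by linarith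
qed

lemma quadratic_nonneg_of_discriminant:
  fixes a b c x :: real
  assumes "0 < a" "b\<^sup>2 \<le> a * c"
  shows "0 \<le> a * x\<^sup>2 - 2 * b * x + c"
proof -
  have "a * (a * x\<^sup>2 - 2 * b * x + c) = (a * x - b)\<^sup>2 + (a * c - b\<^sup>2)"
    by (simp add: algebra_simps power2_eq_square)
  also have "0 \<le> \<dots>" using assms by simp
  finally show ?thesis using assms by (simp add: zero_le_mult_iff)
qed

lemma quadratic_slack_nonneg:
  fixes u D :: real and n :: nat
  assumes n: "9 \<le> n" and u: "1 \<le> u" and D: "1 \<le> D" "D \<le> real n - 2 * ln (real n) - 3"
  shows "0 \<le> u\<^sup>2 + 2 * u * (1 - D - ln u) + (real n - 2) * D - (real n - 1)"
proof (cases "2 * u \<le> real n - 2")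
  case True
  have "2 * u * ln u \<le> 2 * u * ((u - 1/u) / 2)"
    using u ln_le_half_diff_inverse by (intro mult_left_mono) auto
  also have "\<dots> = u\<^sup>2 - 1"
    using u by (simp add: field_simps power2_eq_square)
  finally have "0 \<le> u\<^sup>2 - 2 * u * ln u - 1" by simp
  moreover have "0 \<le> (D - 1) * (real n - 2 - 2 * u)"
    using True D by simp
  ultimately show ?thesis
    by (simp add: algebra_simps)
next
  case False
  define t L Dmax where "t = ln (real n)" and "L = ln (2::real)" and "Dmax = real n - 2 * t - 3"
  define B K where "B = real n - t - 5 - L" and "K = (real n - 2) * Dmax - (real n - 1)"
  have n4: "4 < real n" using n by simp
  \<comment> \<open>the tangent to ln at n/2\<close>
  have ln_u: "ln u \<le> t - L + 2 * u / real n - 1"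
  proof -
    have "ln (2 * u / real n) \<le> 2 * u / real n - 1"
      using u n4 by (intro ln_le_minus_one) simp
    then show ?thesis
      using u n4 by (simp add: t_def L_def ln_div ln_mult)
  qed
  have "B\<^sup>2 \<le> (1 - 4 / real n) * K"
    using tangent_discriminant_nonneg[OF n] n4
    by (simp add: B_def K_def Dmax_def t_def L_def field_simps)
  then have "0 \<le> (1 - 4 / real n) * u\<^sup>2 - 2 * B * u + K"
    using n4 by (intro quadratic_nonneg_of_discriminant) (simp_all add: field_simps)
  also have "\<dots> \<le> u\<^sup>2 + 2 * u * (1 - Dmax - ln u) + (real n - 2) * Dmax - (real n - 1)"
  proof -
    have "2 * u * (1 - Dmax - (t - L + 2 * u / real n - 1)) \<le> 2 * u * (1 - Dmax - ln u)"
      using ln_u u by (intro mult_left_mono) auto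
    then show ?thesis
      using n4 by (simp add: B_def K_def Dmax_def field_simps power2_eq_square)
  qed
  also have "\<dots> \<le> u\<^sup>2 + 2 * u * (1 - D - ln u) + (real n - 2) * D - (real n - 1)"
  proof -
    have "0 \<le> (Dmax - D) * (2 * u - (real n - 2))"
      using False D by (simp add: Dmax_def t_def)
    then show ?thesis by (simp add: algebra_simps)
  qed
  finally show ?thesis .
qed

subsection \<open>Positive reals with bounded product and sum of squares\<close>

lemma sum_ln_nonneg_of_prod_ge_one:
  fixes x :: "'a \<Rightarrow> real"
  assumes "finite I" "\<forall>i\<in>I. 0 < x i" "1 \<le> (\<Prod>i\<in>I. x i)"
  shows "0 \<le> (\<Sum>i\<in>I. ln (x i))"
proof -
  have "ln (\<Prod>i\<in>I. x i) = (\<Sum>i\<in>I. ln (x i))"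
    using assms by (intro ln_prod) auto
  then show ?thesis
    using ln_ge_zero[OF assms(3)] by simp
qed

lemma card_le_sum_of_prod_ge_one:
  fixes x :: "'a \<Rightarrow> real"
  assumes "finite I" "\<forall>i\<in>I. 0 < x i" "1 \<le> (\<Prod>i\<in>I. x i)"
  shows "real (card I) \<le> (\<Sum>i\<in>I. x i)"
proof -
  have "real (card I) \<le> (\<Sum>i\<in>I. 1 + ln (x i))"
    using sum_ln_nonneg_of_prod_ge_one[OF assms] by (simp add: sum.distrib)
  also have "\<dots> \<le> (\<Sum>i\<in>I. x i)"
    using assms(2) ln_le_minus_one by (intro sum_mono) (simp add: algebra_simps)
  finally show ?thesis .
qed

lemma pos_of_prod_ge_one:
  fixes x :: "'a \<Rightarrow> real"
  assumes "finite I" "\<forall>i\<in>I. 0 \<le> x i" "1 \<le> (\<Prod>i\<in>I. x i)"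
  shows "\<forall>i\<in>I. 0 < x i"
proof
  fix i assume "i \<in> I"
  with assms have "x i \<noteq> 0"
    by (metis not_one_le_zero prod_zero)
  with assms \<open>i \<in> I\<close> show "0 < x i"
    by (simp add: less_le)
qed

lemma one_le_Max_of_prod_ge_one:
  fixes x :: "'a \<Rightarrow> real"
  assumes "finite I" "I \<noteq> {}" "\<forall>i\<in>I. 0 < x i" "1 \<le> (\<Prod>i\<in>I. x i)"
  shows "1 \<le> Max (x ` I)"
proof (rule ccontr)
  assume "\<not> 1 \<le> Max (x ` I)"
  then have less: "\<forall>i\<in>I. x i < 1"
    using assms(1) by (auto dest: Max_ge[of "x ` I", OF finite_imageI])
  obtain i where "i \<in> I"
    using assms(2) by blast
  then have "(\<Prod>i\<in>I. x i) < (\<Prod>i\<in>I. 1)"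
    using assms(1,3) less by (intro prod_mono_strict[of i]) (auto simp: less_imp_le)
  with assms(4) show False by simp
qed

lemma sum_lower_bound_by_ln_and_squares:
  fixes x :: "'a \<Rightarrow> real"
  assumes "1 \<le> u" "\<forall>i\<in>J. 0 < x i \<and> x i \<le> u"
  shows "real (card J) + (\<Sum>i\<in>J. ln (x i))
    + ((\<Sum>i\<in>J. (x i)\<^sup>2) - 2 * (\<Sum>i\<in>J. x i) + real (card J)) / (2 * u) \<le> (\<Sum>i\<in>J. x i)"
proof -
  have "(\<Sum>i\<in>J. (x i - 1)\<^sup>2) = (\<Sum>i\<in>J. (x i)\<^sup>2) - 2 * (\<Sum>i\<in>J. x i) + real (card J)"
    by (simp add: power2_eq_square algebra_simps sum.distrib sum_subtractf sum_distrib_right)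
  moreover have "(\<Sum>i\<in>J. 1 + ln (x i) + (x i - 1)\<^sup>2 / (2 * u)) \<le> (\<Sum>i\<in>J. x i)"
    using assms by (intro sum_mono one_add_ln_add_square_le) auto
  ultimately show ?thesis
    by (simp add: sum.distrib flip: sum_divide_distrib)
qed

lemma sum_ge_of_largest_ge_one:
  fixes x :: "'a \<Rightarrow> real" and D :: real
  assumes I: "finite I" and k: "k \<in> I" and bounds: "\<forall>i\<in>I. 0 < x i \<and> x i \<le> x k"
    and u: "1 \<le> x k" and prod: "1 \<le> (\<Prod>i\<in>I. x i)"
    and squares: "real (card I) * D \<le> (\<Sum>i\<in>I. (x i)\<^sup>2)"
    and n: "9 \<le> card I" and D: "1 \<le> D" "D \<le> real (card I) - 2 * ln (real (card I)) - 3"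
  shows "real (card I) - 1 + D \<le> (\<Sum>i\<in>I. x i)"
proof -
  define n u J where "n = card I" and "u = x k" and "J = I - {k}"
  have remove: "(\<Sum>i\<in>I. f i) = f k + (\<Sum>i\<in>J. f i)" for f :: "'a \<Rightarrow> real"
    using I k by (simp add: J_def sum.remove)
  have card_J: "real (card J) = real n - 1"
    using I k n by (simp add: J_def n_def)
  have ln_J: "- ln u \<le> (\<Sum>i\<in>J. ln (x i))"
    using sum_ln_nonneg_of_prod_ge_one[OF I _ prod] bounds remove[of "\<lambda>i. ln (x i)"]
    by (simp add: u_def)
  have squares_J: "real n * D - u\<^sup>2 \<le> (\<Sum>i\<in>J. (x i)\<^sup>2)"
    using squares remove[of "\<lambda>i. (x i)\<^sup>2"] by (simp add: u_def n_def)
  have "(real n * D - u\<^sup>2 - 2 * (\<Sum>i\<in>J. x i) + (real n - 1)) / (2 * u)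
      \<le> ((\<Sum>i\<in>J. (x i)\<^sup>2) - 2 * (\<Sum>i\<in>J. x i) + real (card J)) / (2 * u)"
    using squares_J card_J u by (intro divide_right_mono) (auto simp: u_def)
  moreover have "\<forall>i\<in>J. 0 < x i \<and> x i \<le> u"
    using bounds by (simp add: J_def u_def)
  ultimately have rest: "real n - 1 - ln u
      + (real n * D - u\<^sup>2 - 2 * (\<Sum>i\<in>J. x i) + (real n - 1)) / (2 * u) \<le> (\<Sum>i\<in>J. x i)"
    using sum_lower_bound_by_ln_and_squares[of u J x] u ln_J card_J by (simp add: u_def)
  have "0 \<le> u\<^sup>2 + 2 * u * (1 - D - ln u) + (real n - 2) * D - (real n - 1)"
    using quadratic_slack_nonneg[OF n[folded n_def] u[folded u_def]] D by (simp add: n_def)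
  with rest u have "(2 * u + 2) * (real n - 1 + D - u) \<le> (2 * u + 2) * (\<Sum>i\<in>J. x i)"
    by (simp add: u_def field_simps power2_eq_square)
  then have "real n - 1 + D - u \<le> (\<Sum>i\<in>J. x i)"
    using u by (simp add: u_def mult_le_cancel_left_pos)
  then show ?thesis
    using remove[of x] by (simp add: u_def n_def)
qed

lemma sum_ge_of_prod_ge_one_and_sum_squares_ge:
  fixes x :: "'a \<Rightarrow> real" and D :: real
  assumes I: "finite I" and pos: "\<forall>i\<in>I. 0 < x i" and prod: "1 \<le> (\<Prod>i\<in>I. x i)"
    and squares: "real (card I) * D \<le> (\<Sum>i\<in>I. (x i)\<^sup>2)"
    and D: "D \<le> real (card I) - 2 * ln (real (card I)) - 3"
  shows "real (card I) - 1 + D \<le> (\<Sum>i\<in>I. x i)"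
proof (cases "D \<le> 1")
  case True
  then show ?thesis
    using card_le_sum_of_prod_ge_one[OF I pos prod] by linarith
next
  case False
  have n: "9 \<le> card I"
    using False D by (intro nine_le_if_bound_gt_one) simp
  then have "I \<noteq> {}" by auto
  then have "Max (x ` I) \<in> x ` I"
    using I by simp
  then obtain k where k: "k \<in> I" "x k = Max (x ` I)"
    by auto
  have "\<forall>i\<in>I. 0 < x i \<and> x i \<le> x k"
    using I pos k by simp
  moreover have "1 \<le> x k"
    using one_le_Max_of_prod_ge_one[OF I \<open>I \<noteq> {}\<close> pos prod] k by simp
  ultimately show ?thesis
    using sum_ge_of_largest_ge_one[OF I k(1)] prod squares n False D by simp
qed

subsection \<open>Eigenvalues, determinant and trace\<close>

definition trace :: "'a::comm_ring_1 mat \<Rightarrow> 'a" where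
  "trace A = (\<Sum>i<dim_row A. A $$ (i, i))"

lemma trace_mult_comm:
  assumes "A \<in> carrier_mat n m" "B \<in> carrier_mat m n"
  shows "trace (A * B) = trace (B * A)"
proof -
  have "trace (A * B) = (\<Sum>i<n. \<Sum>k<m. A $$ (i, k) * B $$ (k, i))"
    unfolding trace_def using assms by (auto simp: scalar_prod_def atLeast0LessThan)
  also have "\<dots> = (\<Sum>k<m. \<Sum>i<n. B $$ (k, i) * A $$ (i, k))"
    by (subst sum.swap) (simp add: mult.commute)
  also have "\<dots> = trace (B * A)"
    unfolding trace_def using assms by (auto simp: scalar_prod_def atLeast0LessThan)
  finally show ?thesis .
qed

lemma trace_similar:
  assumes "similar_mat_wit A B P Q"
  shows "trace A = trace B"
proof -
  from similar_mat_witD[OF refl assms] obtain n where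
    "n = dim_row A" "Q * P = 1\<^sub>m n" "A = P * (B * Q)"
    "B \<in> carrier_mat n n" "P \<in> carrier_mat n n" "Q \<in> carrier_mat n n"
    by (metis assoc_mult_mat)
  then show ?thesis
    by (simp add: trace_mult_comm[of P n n "B * Q"] assoc_mult_mat[of B n n Q n P n])
qed

lemma diag_mult_upper_triangular:
  assumes "B \<in> carrier_mat n n" "C \<in> carrier_mat n n"
    and "upper_triangular B" "upper_triangular C" "i < n"
  shows "(B * C) $$ (i, i) = B $$ (i, i) * C $$ (i, i)"
proof -
  have "(B * C) $$ (i, i) = (\<Sum>k<n. B $$ (i, k) * C $$ (k, i))"
    using assms by (simp add: scalar_prod_def atLeast0LessThan)
  also have "\<dots> = (\<Sum>k<n. if k = i then B $$ (i, i) * C $$ (i, i) else 0)"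
    using assms by (intro sum.cong refl) (auto simp: upper_triangular_def dest: linorder_neqE_nat)
  finally show ?thesis using assms by simp
qed

lemma proots_prod_linear_factors:
  "proots (\<Prod>a\<leftarrow>as. [:- a, 1:]) = mset (as :: 'a::idom list)"
proof (induction as)
  case (Cons a as)
  have "(\<Prod>a\<leftarrow>as. [:- a, 1:]) \<noteq> 0"
    by (auto simp: prod_list_zero_iff)
  with Cons.IH show ?case
    by (simp add: proots_mult del: mult_pCons_left)
qed simp

lemma eigenvalues_det_trace_square:
  fixes A :: "complex mat"
  assumes A: "A \<in> carrier_mat n n"
  obtains es where "length es = n" "proots (char_poly A) = mset es"
    "det A = prod_list es" "trace (A * A) = (\<Sum>e\<leftarrow>es. e\<^sup>2)"
proof -
  obtain es where char: "char_poly A = (\<Prod>a\<leftarrow>es. [:- a, 1:])" and len: "length es = n"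
    using char_poly_factorized[OF A] by blast
  obtain B P Q where "schur_decomposition A es = (B, P, Q)"
    by (metis prod.exhaust)
  with schur_decomposition[OF A char] have wit: "similar_mat_wit A B P Q"
    and ut: "upper_triangular B" and diag: "diag_mat B = es" by auto
  have B: "B \<in> carrier_mat n n"
    using similar_mat_witD2[OF A wit] by simp
  have "det A = prod_list es"
    using det_similar[of A B] wit det_upper_triangular[OF ut B] diag
    by (auto simp: similar_mat_def)
  moreover have "trace (A * A) = trace (B * B)"
    using trace_similar[OF similar_mat_wit_pow[OF wit, of 2]] A B
    by (simp add: numeral_2_eq_2)
  moreover have "trace (B * B) = (\<Sum>e\<leftarrow>es. e\<^sup>2)"
  proof -
    have "trace (B * B) = (\<Sum>i<n. (B * B) $$ (i, i))"
      using B by (simp add: trace_def)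
    also have "\<dots> = (\<Sum>i<n. (B $$ (i, i))\<^sup>2)"
      using B ut by (intro sum.cong refl) (metis diag_mult_upper_triangular lessThan_iff power2_eq_square)
    also have "\<dots> = (\<Sum>e\<leftarrow>es. e\<^sup>2)"
      unfolding diag[symmetric] diag_mat_def using B
      by (simp add: comp_def atLeast0LessThan flip: sum_set_upt_conv_sum_list_nat)
    finally show ?thesis .
  qed
  ultimately show thesis
    using that len char by (simp add: proots_prod_linear_factors)
qed

subsection \<open>Adjacency matrices\<close>

lemma adj_matrix_carrier: "adj_matrix n E \<in> carrier_mat n n"
  by (simp add: adj_matrix_def)

lemma abs_det_adj_matrix_ge_one:
  assumes "det (adj_matrix n E) \<noteq> 0"
  shows "1 \<le> \<bar>det (adj_matrix n E)\<bar>"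
proof -
  define M :: "int mat" where "M = mat n n (\<lambda>(i, j). if E i j then 1 else 0)"
  have "adj_matrix n E = map_mat of_int M"
    by (intro eq_matI) (auto simp: adj_matrix_def M_def)
  then have det: "det (adj_matrix n E) = of_int (det M)"
    by simp
  with assms have "1 \<le> \<bar>det M\<bar>"
    by linarith
  with det show ?thesis
    by (simp flip: of_int_abs)
qed

lemma card_adjacent_pairs:
  assumes "simple_graph n E"
  shows "card {(i, j). i < n \<and> j < n \<and> E i j} = 2 * num_edges n E"
proof -
  define U where "U = {(i, j). i < j \<and> j < n \<and> E i j}"
  have "{(i, j). i < n \<and> j < n \<and> E i j} = U \<union> prod.swap ` U"
    using assms by (auto simp: U_def simple_graph_def image_iff) (metis linorder_neqE_nat)
  moreover have "finite U"
    by (rule finite_subset[of _ "{..<n} \<times> {..<n}"]) (auto simp: U_def)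
  moreover have "U \<inter> prod.swap ` U = {}"
    by (auto simp: U_def)
  ultimately show ?thesis
    by (simp add: card_Un_disjoint card_image num_edges_def U_def)
qed

lemma trace_adj_matrix_square:
  assumes "simple_graph n E"
  defines "A \<equiv> map_mat complex_of_real (adj_matrix n E)"
  shows "trace (A * A) = of_nat (2 * num_edges n E)"
proof -
  have "trace (A * A) = (\<Sum>i<n. \<Sum>k<n. if E i k then 1 else 0)"
    using assms by (auto simp: trace_def A_def adj_matrix_def scalar_prod_def atLeast0LessThan
        simple_graph_def intro!: sum.cong)
  also have "\<dots> = (\<Sum>p\<in>{..<n} \<times> {..<n}. if E (fst p) (snd p) then 1 else 0)"
    by (simp add: sum.cartesian_product case_prod_beta)
  also have "\<dots> = of_nat (card {p \<in> {..<n} \<times> {..<n}. E (fst p) (snd p)})"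
    by (simp add: sum.inter_filter[symmetric])
  also have "{p \<in> {..<n} \<times> {..<n}. E (fst p) (snd p)} = {(i, k). i < n \<and> k < n \<and> E i k}"
    by auto
  finally show ?thesis
    using card_adjacent_pairs[OF assms(1)] by simp
qed

lemma Re_power2_le_cmod_power2: "Re (z\<^sup>2) \<le> (cmod z)\<^sup>2"
  by (simp add: power2_eq_square cmod_power2[unfolded power2_eq_square])

lemma adjacency_eigenvalue_moduli:
  assumes "simple_graph n E" "det (adj_matrix n E) \<noteq> 0"
  obtains x :: "nat \<Rightarrow> real"
  where "graph_energy n E = (\<Sum>i<n. x i)" "\<forall>i\<in>{..<n}. 0 \<le> x i" "1 \<le> (\<Prod>i<n. x i)"
    "real n * avg_degree n E \<le> (\<Sum>i<n. (x i)\<^sup>2)"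
proof -
  define A where "A = map_mat complex_of_real (adj_matrix n E)"
  have "A \<in> carrier_mat n n"
    by (simp add: A_def adj_matrix_carrier)
  then obtain es where len: "length es = n" and eig: "proots (char_poly A) = mset es"
    and det: "det A = prod_list es" and trace: "trace (A * A) = (\<Sum>e\<leftarrow>es. e\<^sup>2)"
    by (rule eigenvalues_det_trace_square)
  define x where "x i = cmod (es ! i)" for i
  have "graph_energy n E = sum_list (map cmod es)"
    unfolding graph_energy_def eigenvalues_mset_def A_def[symmetric] eig
    by (simp add: sum_mset_sum_list flip: mset_map)
  also have "\<dots> = (\<Sum>i<n. x i)"
    using len by (simp add: x_def sum_list_sum_nth atLeast0LessThan)
  finally have "graph_energy n E = (\<Sum>i<n. x i)" .
  moreover have "(\<Prod>i<n. x i) = cmod (det A)"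
    using len by (simp add: det x_def prod.list_conv_set_nth atLeast0LessThan prod_norm)
  moreover have "cmod (det A) = \<bar>det (adj_matrix n E)\<bar>"
    by (simp add: A_def)
  moreover have "real n * avg_degree n E = real (2 * num_edges n E)"
    by (cases "n = 0") (simp_all add: avg_degree_def num_edges_def)
  moreover have "\<dots> = Re (trace (A * A))"
    using trace_adj_matrix_square[OF assms(1)] by (simp add: A_def)
  moreover have "\<dots> = (\<Sum>i<n. Re ((es ! i)\<^sup>2))"
    using len by (simp add: trace sum_list_sum_nth atLeast0LessThan)
  moreover have "\<dots> \<le> (\<Sum>i<n. (x i)\<^sup>2)"
    by (intro sum_mono) (simp add: x_def Re_power2_le_cmod_power2)
  ultimately show thesis
    using that[of x] abs_det_adj_matrix_ge_one[OF assms(2)] by (simp add: x_def)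
qed

theorem theorem3p3:
  fixes n :: nat and E :: "nat \<Rightarrow> nat \<Rightarrow> bool"
  assumes "simple_graph n E"
    and "det (adj_matrix n E) \<noteq> 0"
    and "avg_degree n E \<le> real n - 2 * ln (real n) - 3"
    and "\<not> graph_iso n E 4 P4_edges"
    and "\<not> graph_iso n E 4 paw_edges"
  shows "graph_energy n E \<ge> real n - 1 + avg_degree n E"
proof -
  obtain x where energy: "graph_energy n E = (\<Sum>i<n. x i)" and nonneg: "\<forall>i\<in>{..<n}. 0 \<le> x i"
    and prod: "1 \<le> (\<Prod>i<n. x i)" and squares: "real n * avg_degree n E \<le> (\<Sum>i<n. (x i)\<^sup>2)"
    using adjacency_eigenvalue_moduli[OF assms(1,2)] .
  have pos: "\<forall>i\<in>{..<n}. 0 < x i"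
    using pos_of_prod_ge_one[OF _ nonneg prod] by simp
  show ?thesis
    using sum_ge_of_prod_ge_one_and_sum_squares_ge[OF _ pos prod] squares assms(3)
    by (simp add: energy)
qed

end
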